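(* Let $n$ be a positive integer and let $u:\{-n,\dots,n\}\to\mathbb{R}$ satisfy $u(j)=u(-j)$ for all $j$, $\sum_{j=-n}^{n}u(j)=1$, and $\widehat{u}(\xi)\ge 0$ for all $\xi\in\mathbb{T}$. Then $$\sup_{0\neq f\in\ell^2(\mathbb{Z})}\frac{\|\nabla^{4}(u\ast f)\|_{\ell^2(\mathbb{Z})}}{\|f\|_{\ell^2(\mathbb{Z})}}\ \ge\ \frac{2^6}{(n+2)^2}\tan^2\!\left(\frac{\pi}{2n+4}\right).$$ Moreover, equality holds if and only if for every $m\in\{0,\dots,n\}$, $$u(m)=u(-m)=\frac{1}{\pi}\int_{-1}^{1}S_n(x)T_m(x)\frac{dx}{\sqrt{1-x^2}},$$ where $$S_n(x)=\frac{8}{(n+2)^2}\tan^2\!\left(\frac{\pi}{2n+4}\right)\frac{1}{(1-x)^2}\left(1+T_{n+2}\!\left(\frac{1+\cos(\pi/(n+2))}{2}(x+1)-1\right)\right)$$ (a polynomial of degree $n$).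
   Context: Functions on $\{-n,\dots,n\}$ are regarded as functions on $\mathbb{Z}$ vanishing outside it. $\nabla g(k)=g(k+1)-g(k)$, $\nabla^{\ell}=\nabla(\nabla^{\ell-1})$; $(u\ast f)(k)=\sum_j u(j)f(k-j)$; $\mathbb{T}=\mathbb{R}/2\pi\mathbb{Z}$; $\widehat{u}(\xi)=\sum_k u(k)e^{-ik\xi}$. $T_m$ denotes the Chebyshev polynomial of the first kind of degree $m$, $T_m(\cos\theta)=\cos(m\theta)$. The supremum is over nonzero $f\in\ell^2(\mathbb{Z})$. *)

theory Defs
  imports "HOL-Analysis.Analysis"
begin

fun cheb_T :: "nat \<Rightarrow> real \<Rightarrow> real" where
  "cheb_T 0 x = 1"
| "cheb_T (Suc 0) x = x"
| "cheb_T (Suc (Suc m)) x = 2 * x * cheb_T (Suc m) x - cheb_T m x"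

definition nabla :: "(int \<Rightarrow> real) \<Rightarrow> int \<Rightarrow> real" where
  "nabla g k = g (k + 1) - g k"

definition nabla_pow :: "nat \<Rightarrow> (int \<Rightarrow> real) \<Rightarrow> int \<Rightarrow> real" where
  "nabla_pow l = nabla ^^ l"

definition conv :: "nat \<Rightarrow> (int \<Rightarrow> real) \<Rightarrow> (int \<Rightarrow> real) \<Rightarrow> int \<Rightarrow> real" where
  "conv n u f k = (\<Sum>j = - int n .. int n. u j * f (k - j))"

definition fourier :: "nat \<Rightarrow> (int \<Rightarrow> real) \<Rightarrow> real \<Rightarrow> complex" where
  "fourier n u \<xi> = (\<Sum>k = - int n .. int n. complex_of_real (u k) * exp (- \<i> * of_int k * of_real \<xi>))"

definition in_l2 :: "(int \<Rightarrow> real) \<Rightarrow> bool" where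
  "in_l2 f \<longleftrightarrow> (\<lambda>k. (f k)\<^sup>2) summable_on UNIV"

definition l2norm :: "(int \<Rightarrow> real) \<Rightarrow> real" where
  "l2norm f = sqrt (\<Sum>\<^sub>\<infinity>k. (f k)\<^sup>2)"

definition op_sup :: "nat \<Rightarrow> (int \<Rightarrow> real) \<Rightarrow> real" where
  "op_sup n u = Sup {l2norm (nabla_pow 4 (conv n u f)) / l2norm f | f. in_l2 f \<and> f \<noteq> (\<lambda>_. 0)}"

definition S_poly :: "nat \<Rightarrow> real \<Rightarrow> real" where
  "S_poly n x = 8 / (real n + 2)\<^sup>2 * (tan (pi / (2 * real n + 4)))\<^sup>2 * (1 / (1 - x)\<^sup>2)
     * (1 + cheb_T (n + 2) ((1 + cos (pi / (real n + 2))) / 2 * (x + 1) - 1))"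

end

theory Submission
  imports Defs "HOL-Computational_Algebra.Polynomial"
begin

text \<open>
  The operator \<open>f \<mapsto> nabla^4 (u * f)\<close> is a Fourier multiplier with symbol
  \<open>(e^(it) - 1)^4 hat u (t)\<close>: Parseval's identity bounds its norm by the supremum of the symbol,
  and long truncated plane waves show that this supremum is attained.  For symmetric \<open>u\<close>,
  \<open>hat u (t) = p (cos t)\<close> for a polynomial \<open>p\<close> of degree at most \<open>n\<close> with \<open>p 1 = 1\<close> and
  \<open>p \<ge> 0\<close> on \<open>[-1, 1]\<close>, so the norm is the maximum of \<open>(2 - 2x)^2 p x\<close> over \<open>[-1, 1]\<close>.

  The polynomial \<open>S_n\<close> satisfies
  \<open>(1 - x)^2 S_n x = c (1 + T_(n+2) (alpha (x + 1) - 1))\<close>, which equioscillates between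
  \<open>0\<close> and \<open>2 c\<close> at \<open>n + 1\<close> nodes in \<open>[-1, 1)\<close>.  If \<open>p\<close> did at least as well as \<open>S_n\<close>,
  then \<open>S_n - p\<close> would alternate in sign at these nodes and vanish at \<open>1\<close>; by Lagrange
  interpolation it is then zero.  Finally, \<open>p\<close> is determined by its Chebyshev coefficients,
  which are the values \<open>u m\<close>.
\<close>

section \<open>Chebyshev polynomials\<close>

lemma cheb_T_cos: "cheb_T m (cos t) = cos (real m * t)"
proof (induction m "cos t" rule: cheb_T.induct)
  case (3 m)
  have "cos (real (Suc (Suc m)) * t) = 2 * cos t * cos (real (Suc m) * t) - cos (real m * t)"
    using cos_add[of "real (Suc m) * t" t] cos_diff[of "real (Suc m) * t" t]
    by (simp add: algebra_simps distrib_right)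
  then show ?case using 3 by simp
qed simp_all

lemma abs_cheb_T_le_one: "\<bar>x\<bar> \<le> 1 \<Longrightarrow> \<bar>cheb_T m x\<bar> \<le> 1"
  using cheb_T_cos[of m "arccos x"] by simp

lemma cheb_T_one [simp]: "cheb_T m 1 = 1"
  using cheb_T_cos[of m 0] by simp

fun cheb_poly :: "nat \<Rightarrow> real poly" where
  "cheb_poly 0 = 1"
| "cheb_poly (Suc 0) = [:0, 1:]"
| "cheb_poly (Suc (Suc m)) = [:0, 2:] * cheb_poly (Suc m) - cheb_poly m"

lemma poly_cheb_poly [simp]: "poly (cheb_poly m) x = cheb_T m x"
  by (induction m rule: cheb_poly.induct) auto

lemma degree_cheb_poly [simp]: "degree (cheb_poly m) = m"
proof -
  have "degree (cheb_poly m) = m \<and> coeff (cheb_poly m) m \<noteq> 0"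
  proof (induction m rule: cheb_poly.induct)
    case (3 m)
    have "degree ([:0, 2:] * cheb_poly (Suc m)) \<le> Suc (Suc m)"
      using degree_mult_le[of "[:0,2:]" "cheb_poly (Suc m)"] 3 by simp
    moreover have "degree (cheb_poly m) \<le> Suc (Suc m)"
      using 3 by simp
    ultimately have "degree (cheb_poly (Suc (Suc m))) \<le> Suc (Suc m)"
      unfolding cheb_poly.simps by (rule degree_diff_le)
    moreover have "coeff (cheb_poly (Suc (Suc m))) (Suc (Suc m)) \<noteq> 0"
      using 3 by (simp add: coeff_eq_0)
    ultimately show ?case using le_degree le_antisym by blast
  qed simp_all
  then show ?thesis ..
qed

lemma cheb_expansion_exists:
  fixes P :: "real poly"
  assumes "degree P \<le> d"
  shows "\<exists>c. P = (\<Sum>j\<le>d. smult (c j) (cheb_poly j))"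
  using assms
proof (induction d arbitrary: P)
  case 0
  then obtain a where "P = [:a:]" by (metis degree_0_id le_zero_eq)
  then show ?case by (intro exI[of _ "\<lambda>_. a"]) simp
next
  case (Suc d)
  define a where "a = coeff P (Suc d) / lead_coeff (cheb_poly (Suc d))"
  have "cheb_poly (Suc d) \<noteq> 0"
    by (metis poly_0 poly_cheb_poly cheb_T_one zero_neq_one)
  then have lc: "coeff (cheb_poly (Suc d)) (Suc d) \<noteq> 0"
    using leading_coeff_neq_0 by fastforce
  have "coeff (P - smult a (cheb_poly (Suc d))) i = 0" if "d < i" for i
  proof (cases "i = Suc d")
    case True
    then show ?thesis using lc by (simp add: a_def)
  next
    case False
    then show ?thesis using that Suc.prems by (simp add: coeff_eq_0)
  qed
  then have "degree (P - smult a (cheb_poly (Suc d))) \<le> d"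
    by (intro degree_le) auto
  then obtain c where c: "P - smult a (cheb_poly (Suc d)) = (\<Sum>j\<le>d. smult (c j) (cheb_poly j))"
    using Suc.IH by blast
  have "P = (\<Sum>j\<le>Suc d. smult ((c(Suc d := a)) j) (cheb_poly j))"
    using c by (simp add: algebra_simps)
  then show ?case by blast
qed

lemma cos_mult_cos_antiderivative:
  obtains G where "\<And>t. (G has_real_derivative cos (real j * t) * cos (real m * t)) (at t)"
    and "G pi - G 0 = (if j = m then (if m = 0 then pi else pi / 2) else 0)"
proof -
  define A :: "int \<Rightarrow> real \<Rightarrow> real"
    where "A k t = (if k = 0 then t else sin (of_int k * t) / of_int k)" for k t
  have A': "(A k has_real_derivative cos (of_int k * t)) (at t)" for k t
    unfolding A_def by (cases "k = 0") (auto intro!: derivative_eq_intros)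
  have A_pi: "A k pi - A k 0 = (if k = 0 then pi else 0)" for k
    using sin_times_pi_eq_0[of "of_int k"] by (simp add: A_def mult.commute)
  define G where "G t = (A (int j - int m) t + A (int j + int m) t) / 2" for t
  show thesis
  proof (rule that[of G])
    fix t
    have "cos (real j * t) * cos (real m * t)
        = (cos (of_int (int j - int m) * t) + cos (of_int (int j + int m) * t)) / 2"
      using cos_add[of "real j * t" "real m * t"] cos_diff[of "real j * t" "real m * t"]
      by (simp add: algebra_simps)
    then show "(G has_real_derivative cos (real j * t) * cos (real m * t)) (at t)"
      unfolding G_def by (auto intro!: derivative_eq_intros A')
  next
    show "G pi - G 0 = (if j = m then (if m = 0 then pi else pi / 2) else 0)"
      using A_pi[of "int j - int m"] A_pi[of "int j + int m"]
      by (auto simp: G_def field_simps)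
  qed
qed

lemma cheb_orthogonal:
  "((\<lambda>x. cheb_T j x * cheb_T m x / sqrt (1 - x\<^sup>2)) has_integral
     (if j = m then (if m = 0 then pi else pi / 2) else 0)) {-1..1}"
proof -
  obtain G where G': "\<And>t. (G has_real_derivative cos (real j * t) * cos (real m * t)) (at t)"
    and G_pi: "G pi - G 0 = (if j = m then (if m = 0 then pi else pi / 2) else 0)"
    using cos_mult_cos_antiderivative[of j m] by blast
  \<comment> \<open>the substitution \<open>x = cos t\<close>\<close>
  define F where "F x = - G (arccos x)" for x
  have F': "(F has_vector_derivative (cheb_T j x * cheb_T m x / sqrt (1 - x\<^sup>2))) (at x)"
    if "x \<in> {-1<..<1}" for x
  proof -
    have x: "-1 < x" "x < 1" using that by auto
    have "(F has_real_derivative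
        - (cos (real j * arccos x) * cos (real m * arccos x) * inverse (- sqrt (1 - x\<^sup>2)))) (at x)"
      unfolding F_def by (intro DERIV_minus DERIV_chain2[OF G' DERIV_arccos[OF x]])
    then show ?thesis
      using cheb_T_cos[of _ "arccos x"] x
      by (simp add: divide_inverse has_real_derivative_iff_has_vector_derivative)
  qed
  have "continuous_on UNIV G"
    using G' by (meson DERIV_isCont continuous_at_imp_continuous_on)
  then have "continuous_on {-1..1} F"
    unfolding F_def
    by (intro continuous_on_minus continuous_on_compose2[OF _ continuous_on_arccos']) auto
  then have "((\<lambda>x. cheb_T j x * cheb_T m x / sqrt (1 - x\<^sup>2)) has_integral (F 1 - F (-1))) {-1..1}"
    by (intro fundamental_theorem_of_calculus_interior) (use F' in auto)
  then show ?thesis using G_pi by (simp add: F_def)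
qed

definition cheb_coeff :: "nat \<Rightarrow> real poly \<Rightarrow> real" where
  "cheb_coeff m P = 1 / pi * integral {-1..1} (\<lambda>x. poly P x * cheb_T m x / sqrt (1 - x\<^sup>2))"

lemma cheb_coeff_cheb_sum:
  assumes "m \<le> d"
  shows "cheb_coeff m (\<Sum>j\<le>d. smult (c j) (cheb_poly j)) = c m / (if m = 0 then 1 else 2)"
proof -
  have "((\<lambda>x. \<Sum>j\<le>d. c j * (cheb_T j x * cheb_T m x / sqrt (1 - x\<^sup>2))) has_integral
      (\<Sum>j\<le>d. c j * (if j = m then (if m = 0 then pi else pi / 2) else 0))) {-1..1}"
    by (intro has_integral_sum has_integral_mult_right cheb_orthogonal) simp
  moreover have "(\<Sum>j\<le>d. c j * (if j = m then (if m = 0 then pi else pi / 2) else 0))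
      = c m * (if m = 0 then pi else pi / 2)"
    using assms by (simp add: if_distrib[of "\<lambda>x. _ * x"] cong: if_cong)
  ultimately have "integral {-1..1} (\<lambda>x. poly (\<Sum>j\<le>d. smult (c j) (cheb_poly j)) x * cheb_T m x / sqrt (1 - x\<^sup>2))
      = c m * (if m = 0 then pi else pi / 2)"
    by (intro integral_unique)
      (simp add: poly_sum sum_distrib_right sum_divide_distrib mult.assoc)
  then show ?thesis unfolding cheb_coeff_def by simp
qed

lemma poly_eq_if_cheb_coeff_eq:
  assumes "degree P \<le> d" "degree Q \<le> d" "\<And>m. m \<le> d \<Longrightarrow> cheb_coeff m P = cheb_coeff m Q"
  shows "P = Q"
proof -
  obtain a b where a: "P = (\<Sum>j\<le>d. smult (a j) (cheb_poly j))"
    and b: "Q = (\<Sum>j\<le>d. smult (b j) (cheb_poly j))"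
    using cheb_expansion_exists assms(1,2) by metis
  have "a m = b m" if "m \<le> d" for m
    using assms(3)[OF that] cheb_coeff_cheb_sum[OF that] unfolding a b
    by (simp split: if_splits)
  then show ?thesis unfolding a b by (intro sum.cong) auto
qed

lemma cheb_poly_pderiv_cos:
  "poly (pderiv (cheb_poly N)) (cos t) * sin t = real N * sin (real N * t)"
proof -
  have "((\<lambda>t. poly (cheb_poly N) (cos t)) has_real_derivative
      poly (pderiv (cheb_poly N)) (cos t) * (- sin t)) (at t)"
    by (rule DERIV_chain2[OF poly_DERIV DERIV_cos])
  moreover have "((\<lambda>t. poly (cheb_poly N) (cos t)) has_real_derivative - sin (real N * t) * real N) (at t)"
    unfolding poly_cheb_poly cheb_T_cos by (auto intro!: derivative_eq_intros)
  ultimately have "poly (pderiv (cheb_poly N)) (cos t) * (- sin t) = - sin (real N * t) * real N"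
    by (rule DERIV_unique)
  then show ?thesis by (simp add: algebra_simps)
qed

lemma cheb_poly_pderiv2_cos:
  "poly (pderiv (cheb_poly N)) (cos t) * cos t - poly (pderiv (pderiv (cheb_poly N))) (cos t) * (sin t)\<^sup>2
     = (real N)\<^sup>2 * cos (real N * t)"
proof -
  have "((\<lambda>t. poly (pderiv (cheb_poly N)) (cos t) * sin t) has_real_derivative
      poly (pderiv (pderiv (cheb_poly N))) (cos t) * (- sin t) * sin t
        + cos t * poly (pderiv (cheb_poly N)) (cos t)) (at t)"
    by (rule DERIV_mult[OF DERIV_chain2[OF poly_DERIV DERIV_cos] DERIV_sin])
  moreover have "((\<lambda>t. poly (pderiv (cheb_poly N)) (cos t) * sin t) has_real_derivative
      real N * (cos (real N * t) * real N)) (at t)"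
    unfolding cheb_poly_pderiv_cos by (auto intro!: derivative_eq_intros)
  ultimately have "poly (pderiv (pderiv (cheb_poly N))) (cos t) * (- sin t) * sin t
      + cos t * poly (pderiv (cheb_poly N)) (cos t) = real N * (cos (real N * t) * real N)"
    by (rule DERIV_unique)
  then show ?thesis by (simp add: power2_eq_square algebra_simps)
qed

lemma cheb_poly_at_cos_pi_div:
  assumes "N \<ge> 2"
  defines "c \<equiv> cos (pi / real N)"
  shows "cheb_T N c = -1"
    and "poly (pderiv (cheb_poly N)) c = 0"
    and "poly (pderiv (pderiv (cheb_poly N))) c = (real N)\<^sup>2 / (sin (pi / real N))\<^sup>2"
proof -
  have N_pi: "real N * (pi / real N) = pi" using assms by simp
  have sin_pos: "sin (pi / real N) > 0"
    using assms by (intro sin_gt_zero) (auto simp: field_simps)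
  show "cheb_T N c = -1" unfolding c_def cheb_T_cos N_pi by simp
  show d1: "poly (pderiv (cheb_poly N)) c = 0"
    using cheb_poly_pderiv_cos[of N "pi / real N"] sin_pos unfolding c_def N_pi by simp
  show "poly (pderiv (pderiv (cheb_poly N))) c = (real N)\<^sup>2 / (sin (pi / real N))\<^sup>2"
    using cheb_poly_pderiv2_cos[of N "pi / real N"] d1 sin_pos unfolding c_def N_pi
    by (simp add: field_simps)
qed

section \<open>Interpolation and sign alternation\<close>

lemma lagrange_interpolation:
  fixes D :: "'b::field poly" and x :: "'a \<Rightarrow> 'b"
  assumes J: "finite J" and inj: "inj_on x J" and deg: "degree D < card J"
  shows "poly D z = (\<Sum>k\<in>J. poly D (x k) * (\<Prod>j\<in>J-{k}. z - x j) / (\<Prod>j\<in>J-{k}. x k - x j))"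
proof -
  define L where "L = (\<Sum>k\<in>J. smult (poly D (x k) / (\<Prod>j\<in>J-{k}. x k - x j)) (\<Prod>j\<in>J-{k}. [:- x j, 1:]))"
  have poly_L: "poly L z = (\<Sum>k\<in>J. poly D (x k) * (\<Prod>j\<in>J-{k}. z - x j) / (\<Prod>j\<in>J-{k}. x k - x j))" for z
    unfolding L_def by (simp add: poly_sum poly_prod)
  have "degree L \<le> card J - 1"
    unfolding L_def
  proof (rule degree_sum_le[OF J])
    fix k assume "k \<in> J"
    have "degree (\<Prod>j\<in>J-{k}. [:- x j, 1:]) \<le> (\<Sum>j\<in>J-{k}. degree [:- x j, 1:])"
      using degree_prod_sum_le[of "J - {k}" "\<lambda>j. [:- x j, 1:]"] J by (simp add: o_def)
    also have "\<dots> = card J - 1" using J \<open>k \<in> J\<close> by simp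
    finally show "degree (smult (poly D (x k) / (\<Prod>j\<in>J-{k}. x k - x j)) (\<Prod>j\<in>J-{k}. [:- x j, 1:]))
        \<le> card J - 1"
      by (rule order.trans[OF degree_smult_le])
  qed
  moreover have "poly D (x i) = poly L (x i)" if i: "i \<in> J" for i
  proof -
    have zero: "(\<Prod>j\<in>J-{k}. x i - x j) = 0" if "k \<in> J" "k \<noteq> i" for k
      using J i that by (intro prod_zero) auto
    have "x i - x j \<noteq> 0" if "j \<in> J - {i}" for j
      using inj_onD[OF inj, of i j] i that by auto
    then have nonzero: "(\<Prod>j\<in>J-{i}. x i - x j) \<noteq> 0"
      using J by (simp add: prod_zero_iff)
    have "poly L (x i) = (\<Sum>k\<in>J. if k = i then poly D (x i) else 0)"
      unfolding poly_L
    proof (intro sum.cong refl)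
      fix k assume "k \<in> J"
      then show "poly D (x k) * (\<Prod>j\<in>J-{k}. x i - x j) / (\<Prod>j\<in>J-{k}. x k - x j)
          = (if k = i then poly D (x i) else 0)"
        using zero[of k] nonzero by (cases "k = i") simp_all
    qed
    then show ?thesis using J i by simp
  qed
  ultimately have "D = L"
    using deg card_image[OF inj] by (intro poly_eqI_degree[of "x ` J"]) auto
  then have "poly D z = poly L z" by simp
  also have "\<dots> = (\<Sum>k\<in>J. poly D (x k) * (\<Prod>j\<in>J-{k}. z - x j) / (\<Prod>j\<in>J-{k}. x k - x j))"
    by (rule poly_L)
  finally show ?thesis .
qed

lemma sign_prod_neg:
  fixes f :: "'a \<Rightarrow> 'b::linordered_idom"
  assumes "finite A" "\<And>j. j \<in> A \<Longrightarrow> f j < 0"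
  shows "(-1) ^ card A * prod f A > 0"
  using assms
proof (induction A rule: finite_induct)
  case (insert a A)
  have "(-1) ^ card (insert a A) * prod f (insert a A) = - f a * ((-1) ^ card A * prod f A)"
    using insert by simp
  moreover have "- f a > 0" "(-1) ^ card A * prod f A > 0"
    using insert by simp_all
  ultimately show ?case by (metis mult_pos_pos)
qed simp

lemma sign_prod_diff_decreasing:
  fixes x :: "nat \<Rightarrow> 'b::linordered_idom"
  assumes dec: "\<And>i j. i < j \<Longrightarrow> j \<le> d \<Longrightarrow> x j < x i" and k: "k \<le> d"
  shows "(-1) ^ k * (\<Prod>j\<in>{0..d}-{k}. x k - x j) > 0"
proof -
  have "{0..d}-{k} = {0..<k} \<union> {k<..d}" using k by auto
  moreover have "(\<Prod>j\<in>{0..<k} \<union> {k<..d}. x k - x j) = (\<Prod>j\<in>{0..<k}. x k - x j) * (\<Prod>j\<in>{k<..d}. x k - x j)"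
    by (rule prod.union_disjoint) auto
  ultimately have "(\<Prod>j\<in>{0..d}-{k}. x k - x j) = (\<Prod>j\<in>{0..<k}. x k - x j) * (\<Prod>j\<in>{k<..d}. x k - x j)"
    by simp
  moreover have "(\<Prod>j\<in>{k<..d}. x k - x j) > 0"
    by (rule prod_pos) (use dec in auto)
  moreover have "(-1) ^ card {0..<k} * (\<Prod>j\<in>{0..<k}. x k - x j) > 0"
    by (rule sign_prod_neg) (use dec k in auto)
  ultimately show ?thesis
    by (simp add: mult.assoc[symmetric])
qed

text \<open>By Lagrange interpolation at the nodes, \<open>D z\<close> is a sum of terms which all have
  the sign of \<open>(-1)^k D (x k)\<close>.\<close>
lemma poly_eq_0_if_alternating:
  fixes D :: "'a::linordered_field poly" and x :: "nat \<Rightarrow> 'a"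
  assumes dec: "\<And>i j. i < j \<Longrightarrow> j \<le> d \<Longrightarrow> x j < x i"
    and below: "\<And>k. k \<le> d \<Longrightarrow> x k < z"
    and deg: "degree D \<le> d" and root: "poly D z = 0"
    and alt: "\<And>k. k \<le> d \<Longrightarrow> (-1) ^ k * poly D (x k) \<ge> 0"
  shows "D = 0"
proof -
  define J where "J = {0..d}"
  define P where "P k = (\<Prod>j\<in>J-{k}. z - x j)" for k
  define Q where "Q k = (\<Prod>j\<in>J-{k}. x k - x j)" for k
  have inj: "inj_on x J"
  proof (rule inj_onI)
    fix i j assume "i \<in> J" "j \<in> J" "x i = x j"
    then show "i = j"
      using dec[of i j] dec[of j i] by (cases i j rule: linorder_cases) (auto simp: J_def)
  qed
  have card_xJ: "card (x ` J) = d + 1" using card_image[OF inj] by (simp add: J_def)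
  have P_pos: "P k > 0" if "k \<in> J" for k
    unfolding P_def by (rule prod_pos) (use below J_def in auto)
  have Q_sign: "(-1) ^ k * Q k > 0" if "k \<in> J" for k
    unfolding Q_def J_def by (rule sign_prod_diff_decreasing) (use dec that J_def in auto)
  have terms_nonneg: "poly D (x k) * P k / Q k \<ge> 0" if "k \<in> J" for k
  proof -
    have "(-1) ^ k * poly D (x k) \<ge> 0" using alt that by (simp add: J_def)
    then have "((-1) ^ k * poly D (x k)) * P k / ((-1) ^ k * Q k) \<ge> 0"
      using less_imp_le[OF P_pos[OF that]] Q_sign[OF that]
      by (intro divide_nonneg_pos[OF mult_nonneg_nonneg])
    also have "((-1) ^ k * poly D (x k)) * P k / ((-1) ^ k * Q k) = poly D (x k) * P k / Q k"
      by (simp add: mult.assoc)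
    finally show ?thesis .
  qed
  have "(\<Sum>k\<in>J. poly D (x k) * P k / Q k) = 0"
    using lagrange_interpolation[OF _ inj, of D z] deg root by (simp add: J_def P_def Q_def)
  then have "poly D (x k) * P k / Q k = 0" if "k \<in> J" for k
    using sum_nonneg_eq_0_iff[of J "\<lambda>k. poly D (x k) * P k / Q k"] terms_nonneg that
    by (simp add: J_def)
  moreover have "P k \<noteq> 0 \<and> Q k \<noteq> 0" if "k \<in> J" for k
    using P_pos[OF that] Q_sign[OF that] by auto
  ultimately have "poly D y = poly 0 y" if "y \<in> x ` J" for y
    using that by auto
  then show ?thesis
    using deg card_xJ by (intro poly_eqI_degree[of "x ` J"]) auto
qed

section \<open>Fourier transforms of finitely supported sequences\<close>

definition wave :: "real \<Rightarrow> int \<Rightarrow> complex" where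
  "wave t k = cis (of_int k * t)"

lemma wave_add: "wave t j * wave t k = wave t (j + k)"
  by (simp add: wave_def cis_mult distrib_right)

lemma wave_0 [simp]: "wave t 0 = 1"
  by (simp add: wave_def)

lemma cnj_wave: "cnj (wave t k) = wave t (- k)"
  by (simp add: wave_def cis_cnj)

lemma norm_wave [simp]: "norm (wave t k) = 1"
  by (simp add: wave_def)

lemma Re_wave: "Re (wave t k) = cos (of_int k * t)"
  by (simp add: wave_def)

lemma wave_of_nat: "wave t (int i) = wave t 1 ^ i"
proof (induction i)
  case (Suc i)
  then show ?case using wave_add[of t "int i" 1] by (simp add: mult.commute add.commute)
qed (simp add: wave_def)

lemma wave_plus_wave_uminus: "wave t k + wave t (- k) = 2 * cos (of_int k * t)"
  by (simp add: wave_def cis.ctr complex_eq_iff)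

lemma fourier_wave: "fourier M g t = (\<Sum>k = - int M .. int M. of_real (g k) * wave t (- k))"
  unfolding fourier_def wave_def cis_conv_exp by (simp add: algebra_simps)

lemma has_integral_wave:
  "((\<lambda>t. wave t m) has_integral (if m = 0 then 2 * complex_of_real pi else 0)) {0 .. 2 * pi}"
proof (cases "m = 0")
  case True
  then show ?thesis
    using has_integral_const_real[of "1::complex" 0 "2 * pi"] by (simp add: wave_def scaleR_conv_of_real)
next
  case False
  define F where "F t = wave t m / (\<i> * of_int m)" for t
  have "(F has_vector_derivative wave t m) (at t within {0 .. 2 * pi})" for t
  proof -
    have "((\<lambda>z. exp (\<i> * of_int m * z) / (\<i> * of_int m)) has_field_derivative
          (\<i> * of_int m) * exp (\<i> * of_int m * of_real t) / (\<i> * of_int m)) (at (of_real t))"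
      by (auto intro!: derivative_eq_intros)
    then have "((\<lambda>z. exp (\<i> * of_int m * z) / (\<i> * of_int m)) has_field_derivative wave t m) (at (of_real t))"
      using False by (simp add: wave_def cis_conv_exp mult.assoc)
    then show ?thesis
      unfolding F_def wave_def cis_conv_exp
      by (auto dest: has_vector_derivative_real_field simp: mult.assoc)
  qed
  then have "((\<lambda>t. wave t m) has_integral (F (2 * pi) - F 0)) {0 .. 2 * pi}"
    by (intro fundamental_theorem_of_calculus) auto
  moreover have "wave (2 * pi) m = 1"
    using cis_multiple_2pi[of "of_int m"] by (simp add: wave_def mult.commute)
  ultimately show ?thesis using False by (simp add: F_def wave_def)
qed

lemma parseval_fourier:
  "((\<lambda>t. (norm (fourier M g t))\<^sup>2) has_integral (2 * pi * (\<Sum>k = - int M .. int M. (g k)\<^sup>2))) {0 .. 2 * pi}"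
proof -
  define V where "V = {- int M .. int M}"
  have V: "finite V" by (simp add: V_def)
  have fourier_sq: "of_real ((norm (fourier M g t))\<^sup>2)
      = (\<Sum>j\<in>V. \<Sum>k\<in>V. of_real (g j * g k) * wave t (j - k))" for t
  proof -
    have "of_real ((norm (fourier M g t))\<^sup>2) = fourier M g t * cnj (fourier M g t)"
      by (rule complex_norm_square)
    also have "\<dots> = (\<Sum>j\<in>V. of_real (g j) * wave t (- j)) * (\<Sum>k\<in>V. of_real (g k) * wave t k)"
      by (simp add: fourier_wave V_def cnj_wave)
    also have "\<dots> = (\<Sum>j\<in>V. \<Sum>k\<in>V. of_real (g j * g k) * wave t (j - k))"
    proof -
      have w: "wave t j * wave t (- k) = wave t (j - k)" for j k
        using wave_add[of t j "- k"] by simp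
      show ?thesis by (simp add: sum_product mult_ac flip: w)
    qed
    finally show ?thesis .
  qed
  have "((\<lambda>t. \<Sum>j\<in>V. \<Sum>k\<in>V. of_real (g j * g k) * wave t (j - k)) has_integral
      (\<Sum>j\<in>V. \<Sum>k\<in>V. of_real (g j * g k) * (if j - k = 0 then 2 * complex_of_real pi else 0))) {0 .. 2 * pi}"
    using V by (intro has_integral_sum has_integral_mult_right has_integral_wave)
  also have "(\<Sum>j\<in>V. \<Sum>k\<in>V. of_real (g j * g k) * (if j - k = 0 then 2 * complex_of_real pi else 0))
      = (of_real (2 * pi * (\<Sum>k\<in>V. (g k)\<^sup>2)) :: complex)"
    using V by (simp add: if_distrib[of "\<lambda>x. _ * x"] sum.delta sum_distrib_left
        power2_eq_square algebra_simps cong: if_cong)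
  finally have "((\<lambda>t. of_real ((norm (fourier M g t))\<^sup>2) :: complex) has_integral
      of_real (2 * pi * (\<Sum>k\<in>V. (g k)\<^sup>2))) {0 .. 2 * pi}"
    by (simp only: fourier_sq)
  then show ?thesis by (auto dest: has_integral_Re simp: V_def)
qed

definition vanishes_outside :: "nat \<Rightarrow> (int \<Rightarrow> real) \<Rightarrow> bool" where
  "vanishes_outside R g \<longleftrightarrow> (\<forall>k. int R < \<bar>k\<bar> \<longrightarrow> g k = 0)"

lemma fourier_eq_if_vanishes_outside:
  assumes "vanishes_outside R g" "R \<le> M"
  shows "fourier M g t = fourier R g t"
  unfolding fourier_def
  by (rule sum.mono_neutral_right) (use assms in \<open>auto simp: vanishes_outside_def\<close>)

lemma fourier_shift:
  assumes g: "vanishes_outside R g" and M: "int R + \<bar>s\<bar> \<le> int M"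
  shows "fourier M (\<lambda>k. g (k + s)) t = wave t s * fourier R g t"
proof -
  define F where "F l = of_real (g l) * wave t (s - l)" for l
  have "fourier M (\<lambda>k. g (k + s)) t = (\<Sum>k = - int M .. int M. F (k + s))"
    unfolding fourier_wave F_def by simp
  also have "\<dots> = (\<Sum>l = - int M + s .. int M + s. F l)"
    by (rule sum.reindex_bij_witness[of _ "\<lambda>l. l - s" "\<lambda>k. k + s"]) auto
  also have "\<dots> = (\<Sum>l = - int R .. int R. F l)"
    by (rule sum.mono_neutral_right) (use g M in \<open>auto simp: vanishes_outside_def F_def\<close>)
  also have "\<dots> = wave t s * fourier R g t"
    unfolding fourier_wave F_def sum_distrib_left
    by (intro sum.cong refl) (simp add: wave_add mult.left_commute)
  finally show ?thesis .
qed

lemma vanishes_outside_nabla_pow: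
  "vanishes_outside R g \<Longrightarrow> vanishes_outside (R + l) (nabla_pow l g)"
  by (induction l) (auto simp: vanishes_outside_def nabla_pow_def nabla_def)

lemma fourier_nabla_pow:
  assumes "vanishes_outside R g"
  shows "fourier (R + l) (nabla_pow l g) t = (wave t 1 - 1) ^ l * fourier R g t"
proof (induction l)
  case 0
  then show ?case by (simp add: nabla_pow_def)
next
  case (Suc l)
  have g: "vanishes_outside (R + l) (nabla_pow l g)"
    using assms by (rule vanishes_outside_nabla_pow)
  have "fourier (R + Suc l) (nabla_pow (Suc l) g) t
      = fourier (R + Suc l) (\<lambda>k. nabla_pow l g (k + 1)) t - fourier (R + Suc l) (nabla_pow l g) t"
    by (simp add: nabla_pow_def nabla_def fourier_def sum_subtractf left_diff_distrib)
  also have "\<dots> = (wave t 1 - 1) * fourier (R + l) (nabla_pow l g) t"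
    using fourier_shift[OF g, of 1 "R + Suc l" t] fourier_eq_if_vanishes_outside[OF g, of "R + Suc l" t]
    by (simp add: left_diff_distrib)
  finally show ?case using Suc by simp
qed

lemma vanishes_outside_conv:
  assumes "vanishes_outside R g"
  shows "vanishes_outside (R + n) (conv n u g)"
  unfolding vanishes_outside_def conv_def
proof (intro allI impI)
  fix k assume "int (R + n) < \<bar>k\<bar>"
  then have "g (k - j) = 0" if "j \<in> {- int n .. int n}" for j
    using assms that unfolding vanishes_outside_def by auto
  then show "(\<Sum>j = - int n .. int n. u j * g (k - j)) = 0" by simp
qed

lemma fourier_conv:
  assumes g: "vanishes_outside R g"
  shows "fourier (R + n) (conv n u g) t = fourier n u t * fourier R g t"
proof -
  have "fourier (R + n) (conv n u g) t = (\<Sum>k = - int (R + n) .. int (R + n).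
      \<Sum>j = - int n .. int n. of_real (u j) * (of_real (g (k + - j)) * wave t (- k)))"
    unfolding fourier_wave conv_def by (simp add: sum_distrib_right mult.assoc)
  also have "\<dots> = (\<Sum>j = - int n .. int n. \<Sum>k = - int (R + n) .. int (R + n).
      of_real (u j) * (of_real (g (k + - j)) * wave t (- k)))"
    by (rule sum.swap)
  also have "\<dots> = (\<Sum>j = - int n .. int n. of_real (u j) * fourier (R + n) (\<lambda>k. g (k + - j)) t)"
    unfolding fourier_wave by (simp only: sum_distrib_left)
  also have "\<dots> = (\<Sum>j = - int n .. int n. of_real (u j) * (wave t (- j) * fourier R g t))"
    by (intro sum.cong refl) (subst fourier_shift[OF g], auto)
  finally show ?thesis by (simp add: fourier_wave sum_distrib_right mult.assoc)
qed

definition cos_poly :: "nat \<Rightarrow> (int \<Rightarrow> real) \<Rightarrow> real poly" where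
  "cos_poly n u = (\<Sum>j\<le>n. smult ((if j = 0 then 1 else 2) * u (int j)) (cheb_poly j))"

lemma degree_cos_poly: "degree (cos_poly n u) \<le> n"
  unfolding cos_poly_def
proof (rule degree_sum_le)
  fix j assume "j \<in> {..n}"
  then show "degree (smult ((if j = 0 then 1 else 2) * u (int j)) (cheb_poly j)) \<le> n"
    using degree_smult_le[of _ "cheb_poly j"] by (metis atMost_iff degree_cheb_poly order.trans)
qed simp

lemma cheb_coeff_cos_poly: "m \<le> n \<Longrightarrow> cheb_coeff m (cos_poly n u) = u (int m)"
  by (simp add: cos_poly_def cheb_coeff_cheb_sum)

lemma sum_symmetric_interval:
  fixes g :: "int \<Rightarrow> 'a::comm_monoid_add"
  shows "(\<Sum>k = - int n .. int n. g k) = g 0 + (\<Sum>m = 1..n. g (int m) + g (- int m))"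
proof (induction n)
  case (Suc n)
  have "{- int (Suc n) .. int (Suc n)} = insert (int (Suc n)) (insert (- int (Suc n)) {- int n .. int n})"
    by auto
  then have "(\<Sum>k = - int (Suc n) .. int (Suc n). g k)
      = g (int (Suc n)) + (g (- int (Suc n)) + (\<Sum>k = - int n .. int n. g k))"
    by simp
  then show ?case using Suc by (simp add: algebra_simps)
qed simp

lemma fourier_cos_poly:
  assumes sym: "\<And>j. u j = u (- j)"
  shows "fourier n u t = of_real (poly (cos_poly n u) (cos t))"
proof -
  have "fourier n u t = of_real (u 0) + (\<Sum>m = 1..n. of_real (u (int m)) * (wave t m + wave t (- m)))"
    unfolding fourier_wave sum_symmetric_interval using sym by (simp add: algebra_simps)
  also have "\<dots> = of_real (u 0 + (\<Sum>m = 1..n. 2 * u (int m) * cos (real m * t)))"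
    by (simp add: wave_plus_wave_uminus mult_ac)
  also have "u 0 + (\<Sum>m = 1..n. 2 * u (int m) * cos (real m * t)) = poly (cos_poly n u) (cos t)"
    by (simp add: cos_poly_def poly_sum cheb_T_cos atMost_atLeast0 sum.atLeast_Suc_atMost)
  finally show ?thesis .
qed

lemma cos_poly_at_one:
  assumes "\<And>j. u j = u (- j)" and "(\<Sum>j = - int n .. int n. u j) = 1"
  shows "poly (cos_poly n u) 1 = 1"
  using fourier_cos_poly[of u, OF assms(1), of n 0] assms(2) by (simp add: fourier_def flip: of_real_sum)

lemma cos_poly_nonneg:
  assumes "\<And>j. u j = u (- j)" and "\<And>\<xi>. fourier n u \<xi> \<in> \<real>\<^sub>\<ge>\<^sub>0" and "\<bar>x\<bar> \<le> 1"
  shows "poly (cos_poly n u) x \<ge> 0"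
  using assms(2)[of "arccos x"] fourier_cos_poly[of u, OF assms(1), of n "arccos x"] assms(3)
  by (simp add: complex_nonneg_Reals_iff)

section \<open>The norm of a difference-convolution operator\<close>

definition diff_conv :: "nat \<Rightarrow> nat \<Rightarrow> (int \<Rightarrow> real) \<Rightarrow> (int \<Rightarrow> real) \<Rightarrow> int \<Rightarrow> real" where
  "diff_conv l n u f = nabla_pow l (conv n u f)"

definition multiplier :: "nat \<Rightarrow> nat \<Rightarrow> (int \<Rightarrow> real) \<Rightarrow> real \<Rightarrow> complex" where
  "multiplier l n u t = (wave t 1 - 1) ^ l * fourier n u t"

lemma vanishes_outside_diff_conv:
  "vanishes_outside R g \<Longrightarrow> vanishes_outside (R + n + l) (diff_conv l n u g)"
  unfolding diff_conv_def by (intro vanishes_outside_nabla_pow vanishes_outside_conv)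

lemma fourier_diff_conv:
  assumes "vanishes_outside R g"
  shows "fourier (R + n + l) (diff_conv l n u g) t = multiplier l n u t * fourier R g t"
  using fourier_nabla_pow[OF vanishes_outside_conv[OF assms]] fourier_conv[OF assms]
  by (simp add: diff_conv_def multiplier_def mult.assoc)

lemma nabla_pow_Suc: "nabla_pow (Suc l) f k = nabla_pow l f (k + 1) - nabla_pow l f k"
  by (simp add: nabla_pow_def nabla_def)

lemma nabla_pow_local:
  assumes "\<And>m. k \<le> m \<Longrightarrow> m \<le> k + int l \<Longrightarrow> f m = g m"
  shows "nabla_pow l f k = nabla_pow l g k"
  using assms
proof (induction l arbitrary: k)
  case 0
  then show ?case by (simp add: nabla_pow_def)
next
  case (Suc l)
  have "nabla_pow l f (k + 1) = nabla_pow l g (k + 1)" "nabla_pow l f k = nabla_pow l g k"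
    by (rule Suc.IH; use Suc.prems in simp)+
  then show ?case by (simp add: nabla_pow_Suc)
qed

lemma diff_conv_local:
  assumes "\<And>m. k - int n \<le> m \<Longrightarrow> m \<le> k + int l + int n \<Longrightarrow> f m = g m"
  shows "diff_conv l n u f k = diff_conv l n u g k"
  unfolding diff_conv_def
  by (rule nabla_pow_local, unfold conv_def, intro sum.cong refl) (use assms in auto)

lemma l2norm_nonneg: "l2norm f \<ge> 0"
  unfolding l2norm_def by (simp add: infsum_nonneg)

lemma l2norm_power2: "(l2norm f)\<^sup>2 = (\<Sum>\<^sub>\<infinity>k. (f k)\<^sup>2)"
  unfolding l2norm_def by (simp add: infsum_nonneg)

lemma sum_le_l2norm_power2:
  assumes "in_l2 f" "finite F"
  shows "(\<Sum>k\<in>F. (f k)\<^sup>2) \<le> (l2norm f)\<^sup>2"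
  unfolding l2norm_power2
  by (rule finite_sum_le_infsum) (use assms in \<open>auto simp: in_l2_def\<close>)

lemma l2norm_power2_finite_support:
  assumes "finite F" "\<And>k. k \<notin> F \<Longrightarrow> f k = 0"
  shows "in_l2 f" "(l2norm f)\<^sup>2 = (\<Sum>k\<in>F. (f k)\<^sup>2)"
proof -
  have "(\<lambda>k. (f k)\<^sup>2) summable_on UNIV \<longleftrightarrow> (\<lambda>k. (f k)\<^sup>2) summable_on F"
    by (rule summable_on_cong_neutral) (use assms(2) in auto)
  then show "in_l2 f" using assms(1) by (simp add: in_l2_def)
  have "(\<Sum>\<^sub>\<infinity>k. (f k)\<^sup>2) = (\<Sum>\<^sub>\<infinity>k\<in>F. (f k)\<^sup>2)"
    by (rule infsum_cong_neutral) (use assms(2) in auto)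
  then show "(l2norm f)\<^sup>2 = (\<Sum>k\<in>F. (f k)\<^sup>2)" using assms(1) by (simp add: l2norm_power2)
qed

lemma diff_conv_truncated_bound:
  assumes B: "\<And>t. norm (multiplier l n u t) \<le> B" and g: "vanishes_outside R g"
  shows "(\<Sum>k = - int (R + n + l) .. int (R + n + l). (diff_conv l n u g k)\<^sup>2)
    \<le> B\<^sup>2 * (\<Sum>k = - int R .. int R. (g k)\<^sup>2)"
proof -
  have "(norm (fourier (R + n + l) (diff_conv l n u g) t))\<^sup>2 \<le> B\<^sup>2 * (norm (fourier R g t))\<^sup>2" for t
    unfolding fourier_diff_conv[OF g] norm_mult power_mult_distrib
    using B[of t] by (intro mult_right_mono power_mono) auto
  then have "2 * pi * (\<Sum>k = - int (R + n + l) .. int (R + n + l). (diff_conv l n u g k)\<^sup>2)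
      \<le> B\<^sup>2 * (2 * pi * (\<Sum>k = - int R .. int R. (g k)\<^sup>2))"
    by (intro has_integral_le[OF parseval_fourier has_integral_mult_right[OF parseval_fourier]])
  then show ?thesis by (simp add: algebra_simps)
qed

lemma diff_conv_partial_sums_le:
  assumes B: "\<And>t. norm (multiplier l n u t) \<le> B" and f: "in_l2 f" and F: "finite F"
  shows "(\<Sum>k\<in>F. (diff_conv l n u f k)\<^sup>2) \<le> B\<^sup>2 * (l2norm f)\<^sup>2"
proof -
  obtain R0 :: nat where R0: "\<And>k. k \<in> F \<Longrightarrow> \<bar>k\<bar> \<le> int R0"
  proof
    fix k assume "k \<in> F"
    then have "\<bar>k\<bar> \<le> Max (abs ` F)" using F by (intro Max_ge) auto
    also have "\<dots> \<le> int (nat (Max (abs ` F)))" by simp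
    finally show "\<bar>k\<bar> \<le> int (nat (Max (abs ` F)))" .
  qed
  define R where "R = R0 + n + l"
  define g where "g k = (if \<bar>k\<bar> \<le> int R then f k else 0)" for k
  have g: "vanishes_outside R g" by (simp add: vanishes_outside_def g_def)
  have "(\<Sum>k\<in>F. (diff_conv l n u f k)\<^sup>2) = (\<Sum>k\<in>F. (diff_conv l n u g k)\<^sup>2)"
  proof (intro sum.cong refl arg_cong[where f = "\<lambda>x. x\<^sup>2"] diff_conv_local)
    fix k m assume "k \<in> F" "k - int n \<le> m" "m \<le> k + int l + int n"
    then show "f m = g m" using R0[of k] by (auto simp: g_def R_def)
  qed
  also have "\<dots> \<le> (\<Sum>k = - int (R + n + l) .. int (R + n + l). (diff_conv l n u g k)\<^sup>2)"
    using R0 F by (intro sum_mono2) (force simp: R_def)+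
  also have "\<dots> \<le> B\<^sup>2 * (\<Sum>k = - int R .. int R. (g k)\<^sup>2)"
    by (rule diff_conv_truncated_bound[OF B g])
  also have "(\<Sum>k = - int R .. int R. (g k)\<^sup>2) = (\<Sum>k = - int R .. int R. (f k)\<^sup>2)"
    by (intro sum.cong refl) (auto simp: g_def)
  also have "\<dots> \<le> (l2norm f)\<^sup>2"
    using f by (intro sum_le_l2norm_power2) auto
  finally show ?thesis by (simp add: mult_left_mono)
qed

lemma diff_conv_l2_bound:
  assumes B: "\<And>t. norm (multiplier l n u t) \<le> B" and f: "in_l2 f"
  shows "in_l2 (diff_conv l n u f)" and "l2norm (diff_conv l n u f) \<le> B * l2norm f"
proof -
  have le: "(\<Sum>k\<in>F. (diff_conv l n u f k)\<^sup>2) \<le> B\<^sup>2 * (l2norm f)\<^sup>2" if "finite F" for F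
    using diff_conv_partial_sums_le[OF B f that] .
  show summable: "in_l2 (diff_conv l n u f)"
    unfolding in_l2_def
    by (rule nonneg_bdd_above_summable_on) (use le in \<open>auto intro!: bdd_aboveI\<close>)
  have "(l2norm (diff_conv l n u f))\<^sup>2 \<le> (B * l2norm f)\<^sup>2"
    unfolding l2norm_power2[of "diff_conv l n u f"] power_mult_distrib
    by (rule infsum_le_finite_sums) (use summable le in \<open>auto simp: in_l2_def\<close>)
  moreover have "B \<ge> 0" using B[of 0] norm_ge_zero order.trans by blast
  ultimately show "l2norm (diff_conv l n u f) \<le> B * l2norm f"
    using l2norm_nonneg by (auto intro: power2_le_imp_le)
qed

lemma conv_cos: "conv n u (\<lambda>k. cos (of_int k * t)) k = Re (wave t k * fourier n u t)"
proof -
  have "wave t k * fourier n u t = (\<Sum>j = - int n .. int n. of_real (u j) * wave t (k - j))"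
    unfolding fourier_wave sum_distrib_left
    by (intro sum.cong refl) (simp add: wave_add mult.left_commute)
  then show ?thesis by (simp add: conv_def Re_wave)
qed

lemma nabla_pow_Re_wave:
  "nabla_pow l (\<lambda>k. Re (wave t k * W)) = (\<lambda>k. Re (wave t k * ((wave t 1 - 1) ^ l * W)))"
proof (induction l)
  case 0
  then show ?case by (simp add: nabla_pow_def)
next
  case (Suc l)
  have "wave t (k + 1) = wave t k * wave t 1" for k by (simp add: wave_add)
  then show ?case
    using Suc by (simp add: nabla_pow_def nabla_def algebra_simps)
qed

lemma diff_conv_cos:
  "diff_conv l n u (\<lambda>k. cos (of_int k * t)) k = Re (wave t k * multiplier l n u t)"
proof -
  have "conv n u (\<lambda>k. cos (of_int k * t)) = (\<lambda>k. Re (wave t k * fourier n u t))"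
    using conv_cos by blast
  then show ?thesis by (simp only: diff_conv_def nabla_pow_Re_wave multiplier_def mult.assoc)
qed

lemma norm_geometric_sum_le:
  fixes q :: "'a::real_normed_field"
  assumes "norm q = 1" "q \<noteq> 1"
  shows "norm (\<Sum>i = a..b. q ^ i) \<le> 2 / norm (1 - q)"
proof (cases "a \<le> b")
  case True
  have "norm (1 - q) * norm (\<Sum>i = a..b. q ^ i) = norm (q ^ a - q ^ Suc b)"
    using sum_gp_multiplied[OF True, of q] by (metis norm_mult)
  also have "\<dots> \<le> 2"
    using norm_triangle_ineq4[of "q ^ a" "q ^ Suc b"] assms(1) by (simp add: norm_power norm_mult)
  finally show ?thesis using assms(2) by (simp add: field_simps)
qed simp

lemma norm_one_minus_wave_2: "norm (1 - wave t 2) = 2 * \<bar>sin t\<bar>"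
proof -
  have "(norm (1 - wave t 2))\<^sup>2 = (1 - cos (2 * t))\<^sup>2 + (sin (2 * t))\<^sup>2"
    by (simp add: wave_def cmod_power2)
  also have "\<dots> = 2 - 2 * cos (2 * t)"
    using sin_cos_squared_add[of "2 * t"] by (simp add: power2_eq_square algebra_simps)
  also have "\<dots> = (2 * sin t)\<^sup>2"
    by (simp add: cos_double_sin power2_eq_square)
  finally have "norm (1 - wave t 2) = sqrt ((2 * sin t)\<^sup>2)"
    by (metis norm_ge_zero real_sqrt_unique)
  then show ?thesis by (simp only: real_sqrt_abs abs_mult)
qed

lemma Re_power2_eq: "(Re w)\<^sup>2 = ((norm w)\<^sup>2 + Re (w\<^sup>2)) / 2"
  by (simp add: cmod_power2 Re_power2)

text \<open>By \<open>Re_power2_eq\<close> the oscillating parts add up to a geometric sum in \<open>wave t 2\<close>,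
  which stays bounded.\<close>
lemma sum_Re_wave_power2:
  assumes "sin t \<noteq> 0"
  shows "\<bar>(\<Sum>i = a..b. (Re (wave t (int i) * Z))\<^sup>2) - real (card {a..b}) * (norm Z)\<^sup>2 / 2\<bar>
    \<le> (norm Z)\<^sup>2 / (2 * \<bar>sin t\<bar>)"
proof -
  define q where "q = wave t 2"
  define w where "w = Re (Z\<^sup>2 * (\<Sum>i = a..b. q ^ i))"
  have q: "wave t (int i) ^ 2 = q ^ i" for i
    by (simp add: q_def wave_of_nat power_mult[symmetric] mult.commute wave_of_nat[of t 2, simplified])
  have "(Re (wave t (int i) * Z))\<^sup>2 = ((norm Z)\<^sup>2 + Re (Z\<^sup>2 * q ^ i)) / 2" for i
    unfolding Re_power2_eq norm_mult norm_wave power_mult_distrib q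
    by (simp only: power_one mult_1 mult.commute)
  then have "(\<Sum>i = a..b. (Re (wave t (int i) * Z))\<^sup>2) = (\<Sum>i = a..b. ((norm Z)\<^sup>2 + Re (Z\<^sup>2 * q ^ i)) / 2)"
    by (simp only:)
  also have "\<dots> = (real (card {a..b}) * (norm Z)\<^sup>2 + w) / 2"
    unfolding w_def sum_distrib_left Re_sum
    by (simp only: sum_divide_distrib[symmetric] sum.distrib sum_constant)
  finally have sum_eq: "(\<Sum>i = a..b. (Re (wave t (int i) * Z))\<^sup>2) = (real (card {a..b}) * (norm Z)\<^sup>2 + w) / 2" .
  have "norm (1 - q) \<noteq> 0" using assms by (simp add: q_def norm_one_minus_wave_2)
  then have q1: "q \<noteq> 1" by auto
  have "\<bar>w\<bar> \<le> norm (Z\<^sup>2 * (\<Sum>i = a..b. q ^ i))"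
    unfolding w_def by (rule abs_Re_le_cmod)
  also have "\<dots> \<le> (norm Z)\<^sup>2 * (2 / norm (1 - q))"
    unfolding norm_mult norm_power
    by (intro mult_left_mono norm_geometric_sum_le) (use q1 in \<open>auto simp: q_def\<close>)
  also have "\<dots> = (norm Z)\<^sup>2 / \<bar>sin t\<bar>"
    by (simp add: q_def norm_one_minus_wave_2)
  finally have bound: "\<bar>w\<bar> \<le> (norm Z)\<^sup>2 / \<bar>sin t\<bar>" .
  have "(real (card {a..b}) * (norm Z)\<^sup>2 + w) / 2 - real (card {a..b}) * (norm Z)\<^sup>2 / 2 = w / 2"
    by (simp add: field_simps)
  then have "\<bar>(\<Sum>i = a..b. (Re (wave t (int i) * Z))\<^sup>2) - real (card {a..b}) * (norm Z)\<^sup>2 / 2\<bar> = \<bar>w\<bar> / 2"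
    unfolding sum_eq by (simp only:)
  also have "\<dots> \<le> (norm Z)\<^sup>2 / \<bar>sin t\<bar> / 2"
    using bound by simp
  finally show ?thesis by simp
qed

definition cos_block :: "nat \<Rightarrow> real \<Rightarrow> int \<Rightarrow> real" where
  "cos_block N t k = (if 0 \<le> k \<and> k < int N then cos (of_int k * t) else 0)"

lemma sum_int_image: "(\<Sum>k\<in>int ` A. g k) = (\<Sum>i\<in>A. g (int i))"
  by (simp add: sum.reindex)

lemma l2norm_cos_block:
  assumes "sin t \<noteq> 0" "N \<ge> 1"
  shows "in_l2 (cos_block N t)"
    and "1 \<le> (l2norm (cos_block N t))\<^sup>2"
    and "(l2norm (cos_block N t))\<^sup>2 \<le> real N / 2 + 1 / (2 * \<bar>sin t\<bar>)"
proof -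
  have support: "cos_block N t k = 0" if "k \<notin> int ` {0..N-1}" for k
  proof (rule ccontr)
    assume "cos_block N t k \<noteq> 0"
    then have "k = int (nat k)" "nat k \<in> {0..N-1}"
      by (auto simp: cos_block_def split: if_splits)
    then show False using that by blast
  qed
  show "in_l2 (cos_block N t)"
    by (rule l2norm_power2_finite_support(1)[of "int ` {0..N-1}"]) (use support in auto)
  have "(l2norm (cos_block N t))\<^sup>2 = (\<Sum>k\<in>int ` {0..N-1}. (cos_block N t k)\<^sup>2)"
    by (rule l2norm_power2_finite_support(2)) (use support in auto)
  also have "\<dots> = (\<Sum>i = 0..N-1. (cos_block N t (int i))\<^sup>2)"
    by (rule sum_int_image)
  also have "\<dots> = (\<Sum>i = 0..N-1. (Re (wave t (int i) * 1))\<^sup>2)"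
    using assms(2) by (intro sum.cong refl) (auto simp: cos_block_def Re_wave)
  finally have norm_eq: "(l2norm (cos_block N t))\<^sup>2 = (\<Sum>i = 0..N-1. (Re (wave t (int i) * 1))\<^sup>2)" .
  show "1 \<le> (l2norm (cos_block N t))\<^sup>2"
    unfolding norm_eq using member_le_sum[of 0 "{0..N-1}" "\<lambda>i. (Re (wave t (int i) * 1))\<^sup>2"]
    by (simp add: Re_wave)
  show "(l2norm (cos_block N t))\<^sup>2 \<le> real N / 2 + 1 / (2 * \<bar>sin t\<bar>)"
    using sum_Re_wave_power2[OF assms(1), where a = 0 and b = "N - 1" and Z = 1] assms(2)
    unfolding norm_eq by (simp add: abs_le_iff)
qed

lemma diff_conv_cos_block_lower:
  fixes u :: "int \<Rightarrow> real"
  assumes "sin t \<noteq> 0" "l + 2 * n < N"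
  defines "m \<equiv> norm (multiplier l n u t)"
  shows "(real N - real (l + 2 * n)) * m\<^sup>2 / 2 - m\<^sup>2 / (2 * \<bar>sin t\<bar>)
    \<le> (l2norm (diff_conv l n u (cos_block N t)))\<^sup>2"
proof -
  define A where "A = diff_conv l n u (cos_block N t)"
  define I where "I = {n .. N - 1 - l - n}"
  have "vanishes_outside N (cos_block N t)"
    by (simp add: vanishes_outside_def cos_block_def)
  then have "vanishes_outside (N + n + l) A"
    unfolding A_def by (rule vanishes_outside_diff_conv)
  then have "in_l2 A"
    by (intro l2norm_power2_finite_support[of "{- int (N + n + l) .. int (N + n + l)}"])
      (auto simp: vanishes_outside_def)
  have "A (int i) = Re (wave t (int i) * multiplier l n u t)" if "i \<in> I" for i
  proof -
    have "A (int i) = diff_conv l n u (\<lambda>k. cos (of_int k * t)) (int i)"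
      unfolding A_def by (rule diff_conv_local) (use that assms(2) in \<open>auto simp: I_def cos_block_def\<close>)
    then show ?thesis by (simp add: diff_conv_cos)
  qed
  then have "(\<Sum>i\<in>I. (Re (wave t (int i) * multiplier l n u t))\<^sup>2) = (\<Sum>k\<in>int ` I. (A k)\<^sup>2)"
    by (simp add: sum_int_image)
  also have "\<dots> \<le> (l2norm A)\<^sup>2"
    using \<open>in_l2 A\<close> by (intro sum_le_l2norm_power2) (auto simp: I_def)
  finally have "(\<Sum>i\<in>I. (Re (wave t (int i) * multiplier l n u t))\<^sup>2) \<le> (l2norm A)\<^sup>2" .
  moreover have "card I = N - (l + 2 * n)"
    using assms(2) by (simp add: I_def)
  then have "(real N - real (l + 2 * n)) * m\<^sup>2 / 2 - m\<^sup>2 / (2 * \<bar>sin t\<bar>)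
      \<le> (\<Sum>i\<in>I. (Re (wave t (int i) * multiplier l n u t))\<^sup>2)"
    using abs_le_D2[OF sum_Re_wave_power2[OF assms(1), where a = n and b = "N - 1 - l - n"
        and Z = "multiplier l n u t"]] assms(2)
    unfolding m_def I_def by (simp add: of_nat_diff)
  ultimately show ?thesis
    unfolding A_def by linarith
qed

lemma isCont_norm_multiplier: "isCont (\<lambda>t. norm (multiplier l n u t)) t"
  unfolding multiplier_def fourier_def wave_def cis_conv_exp by (intro continuous_intros)

text \<open>The truncated wave \<open>cos_block N t\<close> is mapped by \<open>diff_conv l n u\<close> to the wave
  \<open>Re (wave t k * multiplier l n u t)\<close>, except near its ends.\<close>
lemma norm_multiplier_power2_le_of_ratio_bound:
  fixes u :: "int \<Rightarrow> real"
  assumes S: "\<And>f. in_l2 f \<Longrightarrow> f \<noteq> (\<lambda>_. 0) \<Longrightarrow> l2norm (diff_conv l n u f) / l2norm f \<le> S"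
    and st: "sin t \<noteq> 0" and N: "l + 2 * n < N"
  defines "G \<equiv> 1 / \<bar>sin t\<bar>"
  shows "S \<ge> 0"
    and "(norm (multiplier l n u t))\<^sup>2 * ((real N - real (l + 2 * n) - G) / (G + real N)) \<le> S\<^sup>2"
proof -
  define m where "m = norm (multiplier l n u t)"
  define f where "f = cos_block N t"
  have G: "G > 0" using st by (simp add: G_def)
  have f: "in_l2 f" "1 \<le> (l2norm f)\<^sup>2" "(l2norm f)\<^sup>2 \<le> (real N + G) / 2"
    using l2norm_cos_block[OF st, of N] N by (auto simp: f_def G_def add_divide_distrib)
  then have "f \<noteq> (\<lambda>_. 0)" by (auto simp: l2norm_def)
  then have ratio: "l2norm (diff_conv l n u f) / l2norm f \<le> S" using S f(1) by blast
  have f_pos: "l2norm f > 0" using f(2) l2norm_nonneg[of f] by (cases "l2norm f = 0") auto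
  then show S0: "S \<ge> 0"
    using ratio l2norm_nonneg[of "diff_conv l n u f"] by (meson divide_nonneg_pos order.trans)
  have "l2norm (diff_conv l n u f) \<le> S * l2norm f" using ratio f_pos by (simp add: divide_le_eq)
  then have "(l2norm (diff_conv l n u f))\<^sup>2 \<le> (S * l2norm f)\<^sup>2"
    using l2norm_nonneg by (rule power_mono)
  also have "\<dots> = S\<^sup>2 * (l2norm f)\<^sup>2"
    by (simp add: power_mult_distrib)
  also have "\<dots> \<le> S\<^sup>2 * ((real N + G) / 2)"
    using f(3) by (intro mult_left_mono) auto
  finally have "(real N - real (l + 2 * n)) * m\<^sup>2 / 2 - m\<^sup>2 * G / 2 \<le> S\<^sup>2 * ((real N + G) / 2)"
    using diff_conv_cos_block_lower[OF st N, of u] unfolding f_def m_def G_def by simp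
  then have "m\<^sup>2 * (real N - real (l + 2 * n) - G) \<le> S\<^sup>2 * (G + real N)"
    by (simp add: algebra_simps)
  then show "m\<^sup>2 * ((real N - real (l + 2 * n) - G) / (G + real N)) \<le> S\<^sup>2"
    using G by (simp add: field_simps)
qed

lemma norm_multiplier_le_of_ratio_bound:
  assumes S: "\<And>f. in_l2 f \<Longrightarrow> f \<noteq> (\<lambda>_. 0) \<Longrightarrow> l2norm (diff_conv l n u f) / l2norm f \<le> S"
  shows "norm (multiplier l n u t) \<le> S"
proof -
  have generic: "norm (multiplier l n u t) \<le> S" if st: "sin t \<noteq> 0" for t
  proof -
    define m where "m = norm (multiplier l n u t)"
    define c where "c = real (l + 2 * n)"
    define G where "G = 1 / \<bar>sin t\<bar>"
    have G: "G > 0" using st by (simp add: G_def)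
    note bound = norm_multiplier_power2_le_of_ratio_bound[OF S st]
    have "(\<lambda>N. (c + 2 * G) / (G + real N)) \<longlonglongrightarrow> 0"
      by (intro tendsto_divide_0[OF tendsto_const] filterlim_at_top_imp_at_infinity
          filterlim_tendsto_add_at_top[OF tendsto_const filterlim_real_sequentially])
    then have "(\<lambda>N. m\<^sup>2 * (1 - (c + 2 * G) / (G + real N))) \<longlonglongrightarrow> m\<^sup>2 * (1 - 0)"
      by (intro tendsto_mult tendsto_diff tendsto_const)
    moreover have "1 - (c + 2 * G) / (G + real N) = (real N - c - G) / (G + real N)" for N
      using G by (simp add: field_simps)
    ultimately have "(\<lambda>N. m\<^sup>2 * ((real N - c - G) / (G + real N))) \<longlonglongrightarrow> m\<^sup>2"
      by simp
    then have "m\<^sup>2 \<le> S\<^sup>2"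
      by (rule LIMSEQ_le_const2)
        (use bound(2) in \<open>auto simp: m_def c_def G_def intro!: exI[of _ "Suc (l + 2 * n)"]\<close>)
    then show ?thesis
      using bound(1)[of "Suc (l + 2 * n)"] by (simp add: m_def power2_le_iff_abs_le)
  qed
  show ?thesis
  proof (cases "sin t = 0")
    case True
    define h where "h k = inverse (real (Suc k))" for k
    have "(\<lambda>k. t + h k) \<longlonglongrightarrow> t"
      using tendsto_add[OF tendsto_const[of t] LIMSEQ_inverse_real_of_nat] unfolding h_def by simp
    then have "(\<lambda>k. norm (multiplier l n u (t + h k))) \<longlonglongrightarrow> norm (multiplier l n u t)"
      by (rule isCont_tendsto_compose[OF isCont_norm_multiplier])
    moreover have "norm (multiplier l n u (t + h k)) \<le> S" for k
    proof (rule generic)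
      have "0 < h k" "h k \<le> 1" unfolding h_def by (auto simp: field_simps)
      then have "sin (h k) > 0" using pi_gt3 by (intro sin_gt_zero) auto
      moreover have "cos t \<noteq> 0" using True sin_cos_squared_add[of t] by auto
      ultimately show "sin (t + h k) \<noteq> 0" using True by (simp add: sin_add)
    qed
    ultimately show ?thesis by (intro LIMSEQ_le_const2) auto
  qed (rule generic)
qed

lemma norm_multiplier_le: "norm (multiplier l n u t) \<le> 2 ^ l * (\<Sum>k = - int n .. int n. \<bar>u k\<bar>)"
proof -
  have "norm (wave t 1 - 1) \<le> 2"
    using norm_triangle_ineq4[of "wave t 1" 1] by simp
  moreover have "norm (fourier n u t) \<le> (\<Sum>k = - int n .. int n. \<bar>u k\<bar>)"
    unfolding fourier_wave by (rule order.trans[OF norm_sum]) (simp add: norm_mult)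
  ultimately show ?thesis
    unfolding multiplier_def norm_mult norm_power by (intro mult_mono power_mono) auto
qed

theorem Sup_ratio_diff_conv_eq_SUP_multiplier:
  "Sup {l2norm (diff_conv l n u f) / l2norm f | f. in_l2 f \<and> f \<noteq> (\<lambda>_. 0)}
    = (SUP t. norm (multiplier l n u t))"
  (is "Sup ?Q = ?M")
proof (rule antisym)
  have bdd: "bdd_above (range (\<lambda>t. norm (multiplier l n u t)))"
    using norm_multiplier_le by (intro bdd_aboveI2)
  have le_M: "norm (multiplier l n u t) \<le> ?M" for t
    by (rule cSUP_upper[OF UNIV_I bdd])
  have Q_le: "q \<le> ?M" if "q \<in> ?Q" for q
  proof -
    obtain f where f: "in_l2 f" and q: "q = l2norm (diff_conv l n u f) / l2norm f"
      using \<open>q \<in> ?Q\<close> by blast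
    have "l2norm (diff_conv l n u f) \<le> ?M * l2norm f"
      using diff_conv_l2_bound(2)[OF le_M f] .
    moreover have "?M \<ge> 0" using le_M[of 0] norm_ge_zero order.trans by blast
    ultimately show ?thesis
      unfolding q using l2norm_nonneg[of f] by (cases "l2norm f = 0") (auto simp: divide_le_eq)
  qed
  define \<delta> :: "int \<Rightarrow> real" where "\<delta> k = (if k = 0 then 1 else 0)" for k
  have "in_l2 \<delta>" by (rule l2norm_power2_finite_support(1)[of "{0}"]) (auto simp: \<delta>_def)
  moreover have "\<delta> \<noteq> (\<lambda>_. 0)" by (metis \<delta>_def one_neq_zero)
  ultimately have Q_ne: "?Q \<noteq> {}" by blast
  then show "Sup ?Q \<le> ?M" using Q_le by (rule cSup_least)
  have "bdd_above ?Q" using Q_le by (intro bdd_aboveI) blast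
  then have "norm (multiplier l n u t) \<le> Sup ?Q" for t
    by (intro norm_multiplier_le_of_ratio_bound cSup_upper) blast+
  then show "?M \<le> Sup ?Q" by (intro cSUP_least) auto
qed

lemma op_sup_eq_SUP_multiplier: "op_sup n u = (SUP t. norm (multiplier 4 n u t))"
  using Sup_ratio_diff_conv_eq_SUP_multiplier[of 4 n u] unfolding op_sup_def diff_conv_def .

lemma norm_multiplier_cos_poly:
  assumes "\<And>j. u j = u (- j)" and "\<And>\<xi>. fourier n u \<xi> \<in> \<real>\<^sub>\<ge>\<^sub>0"
  shows "norm (multiplier 4 n u t) = (2 - 2 * cos t)\<^sup>2 * poly (cos_poly n u) (cos t)"
proof -
  have "(norm (wave t 1 - 1))\<^sup>2 = (cos t - 1)\<^sup>2 + (sin t)\<^sup>2"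
    unfolding cmod_power2 by (simp add: wave_def)
  also have "\<dots> = 2 - 2 * cos t"
    using sin_cos_squared_add[of t] by (simp add: power2_eq_square algebra_simps)
  finally have sq: "(norm (wave t 1 - 1))\<^sup>2 = 2 - 2 * cos t" .
  have "norm ((wave t 1 - 1) ^ 4) = ((norm (wave t 1 - 1))\<^sup>2)\<^sup>2"
    by (simp add: norm_power flip: power_mult)
  then have "norm ((wave t 1 - 1) ^ 4) = (2 - 2 * cos t)\<^sup>2"
    unfolding sq .
  moreover have "poly (cos_poly n u) (cos t) \<ge> 0"
    using assms by (intro cos_poly_nonneg) auto
  ultimately show ?thesis
    unfolding multiplier_def norm_mult fourier_cos_poly[of u, OF assms(1)] by simp
qed

lemma range_cos: "range cos = {-1..1::real}"
proof
  show "{-1..1} \<subseteq> range (cos :: real \<Rightarrow> real)"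
  proof
    fix x :: real assume "x \<in> {-1..1}"
    then have "x = cos (arccos x)" by simp
    then show "x \<in> range cos" by (rule image_eqI) simp
  qed
qed auto

lemma op_sup_eq_SUP_cos_poly:
  assumes "\<And>j. u j = u (- j)" and "\<And>\<xi>. fourier n u \<xi> \<in> \<real>\<^sub>\<ge>\<^sub>0"
  shows "op_sup n u = (SUP x\<in>{-1..1}. (2 - 2 * x)\<^sup>2 * poly (cos_poly n u) x)"
  unfolding op_sup_eq_SUP_multiplier norm_multiplier_cos_poly[OF assms] range_cos[symmetric]
  by (simp add: image_image)

section \<open>The extremal polynomial\<close>

declare cheb_T.simps(3)[simp del] cheb_poly.simps(3)[simp del]

definition S_alpha :: "nat \<Rightarrow> real" where
  "S_alpha n = (1 + cos (pi / (real n + 2))) / 2"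

definition S_const :: "nat \<Rightarrow> real" where
  "S_const n = 8 / (real n + 2)\<^sup>2 * (tan (pi / (2 * real n + 4)))\<^sup>2"

definition S_numer :: "nat \<Rightarrow> real poly" where
  "S_numer n = pcompose (cheb_poly (n + 2)) [:S_alpha n - 1, S_alpha n:] + 1"

definition S_polynomial :: "nat \<Rightarrow> real poly" where
  "S_polynomial n = smult (S_const n) (S_numer n div [:-1, 1:] ^ 2)"

lemma poly_S_numer: "poly (S_numer n) x = 1 + cheb_T (n + 2) (S_alpha n * (x + 1) - 1)"
  by (simp add: S_numer_def poly_pcompose algebra_simps)

lemma S_alpha_bounds: "0 < S_alpha n" "S_alpha n < 1"
proof -
  have "pi / (real n + 2) \<le> pi / 2" by (intro divide_left_mono) auto
  moreover have "0 < pi / (real n + 2)" by simp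
  ultimately have "0 < pi / (real n + 2)" "pi / (real n + 2) < pi"
    using pi_gt_zero by linarith+
  then have "-1 < cos (pi / (real n + 2))" "cos (pi / (real n + 2)) < 1"
    using cos_monotone_0_pi[of "pi / (real n + 2)" pi] cos_monotone_0_pi[of 0 "pi / (real n + 2)"]
    by auto
  then show "0 < S_alpha n" "S_alpha n < 1" by (auto simp: S_alpha_def)
qed

lemma S_alpha_at_one: "poly [:S_alpha n - 1, S_alpha n:] 1 = cos (pi / real (n + 2))"
  by (simp add: S_alpha_def field_simps add.commute)

lemma S_numer_at_one: "poly (S_numer n) 1 = 0" "poly (pderiv (S_numer n)) 1 = 0"
proof -
  have "n + 2 \<ge> 2" by simp
  note cheb = cheb_poly_at_cos_pi_div[OF this]
  show "poly (S_numer n) 1 = 0"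
    unfolding S_numer_def poly_add poly_pcompose S_alpha_at_one poly_cheb_poly cheb(1) by simp
  have "poly (pderiv (S_numer n)) 1
      = poly (pderiv (cheb_poly (n + 2))) (poly [:S_alpha n - 1, S_alpha n:] 1) * S_alpha n"
    by (simp add: S_numer_def pderiv_add pderiv_pcompose poly_pcompose pderiv_pCons)
  then show "poly (pderiv (S_numer n)) 1 = 0"
    unfolding S_alpha_at_one cheb(2) by simp
qed

lemma S_numer_double_root: "S_numer n = [:-1, 1:] ^ 2 * (S_numer n div [:-1, 1:] ^ 2)"
proof -
  obtain R where R: "S_numer n = [:-1, 1:] * R"
    using S_numer_at_one(1)[of n] by (auto simp: poly_eq_0_iff_dvd dvd_def)
  have "poly (pderiv (S_numer n)) 1 = poly R 1"
    unfolding R pderiv_mult by (simp add: pderiv_pCons)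
  then have "poly R 1 = 0" using S_numer_at_one(2) by simp
  then obtain R' where "R = [:-1, 1:] * R'" by (auto simp: poly_eq_0_iff_dvd dvd_def)
  then have "S_numer n = [:-1, 1:] ^ 2 * R'"
    unfolding R power2_eq_square by (simp only: mult.assoc)
  then show ?thesis by simp
qed

lemma S_polynomial_weighted: "(1 - x)\<^sup>2 * poly (S_polynomial n) x = S_const n * poly (S_numer n) x"
proof -
  define R where "R = S_numer n div [:-1, 1:] ^ 2"
  have "poly (S_numer n) x = (x - 1)\<^sup>2 * poly R x"
    unfolding R_def by (subst S_numer_double_root) (simp add: algebra_simps)
  then show ?thesis by (simp add: S_polynomial_def R_def[symmetric] power2_commute)
qed

lemma S_poly_eq_poly_S_polynomial: "x \<noteq> 1 \<Longrightarrow> S_poly n x = poly (S_polynomial n) x"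
  using S_polynomial_weighted[of x n]
  by (simp add: S_poly_def S_const_def poly_S_numer S_alpha_def field_simps)

lemma degree_S_polynomial: "degree (S_polynomial n) \<le> n"
proof -
  define R where "R = S_numer n div [:-1, 1:] ^ 2"
  have "degree (S_numer n) = n + 2"
    using S_alpha_bounds(1)[of n] unfolding S_numer_def
    by (subst degree_add_eq_left) (auto simp: degree_pcompose)
  moreover have S: "S_numer n = [:-1, 1:] ^ 2 * R"
    unfolding R_def by (rule S_numer_double_root)
  moreover from calculation have "R \<noteq> 0" by auto
  ultimately have "degree R = n"
    by (simp add: degree_mult_eq degree_linear_power)
  then show ?thesis
    unfolding S_polynomial_def R_def[symmetric] using degree_smult_le order.trans by blast
qed

lemma poly_pderiv2_mult_double_root:
  fixes R :: "'a::idom poly"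
  shows "poly (pderiv (pderiv ([:-a, 1:] ^ 2 * R))) a = 2 * poly R a"
proof -
  define A :: "'a poly" where "A = [:-a, 1:]"
  have "pderiv A = 1" "poly A a = 0" by (simp_all add: A_def pderiv_pCons)
  then show ?thesis
    unfolding A_def[symmetric] power2_eq_square
    by (simp add: pderiv_mult pderiv_add algebra_simps)
qed

lemma S_polynomial_at_one: "poly (S_polynomial n) 1 = 1"
proof -
  define R where "R = S_numer n div [:-1, 1:] ^ 2"
  define h where "h = pi / (2 * real n + 4)"
  have h: "0 < h" "h < pi / 2"
  proof -
    have "h \<le> pi / 4" unfolding h_def by (intro divide_left_mono) auto
    then show "h < pi / 2" using pi_gt_zero by linarith
    show "0 < h" by (simp add: h_def)
  qed
  have sin_h: "sin h > 0" using h by (intro sin_gt_zero) auto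
  have cos_h: "cos h > 0" using h by (intro cos_gt_zero) auto
  have two_h: "pi / real (n + 2) = 2 * h" by (simp add: h_def field_simps)
  have alpha: "S_alpha n = (cos h)\<^sup>2"
    using two_h by (simp add: S_alpha_def cos_double_cos add.commute)
  have "n + 2 \<ge> 2" by simp
  note cheb = cheb_poly_at_cos_pi_div[OF this]
  have d2: "pderiv (pderiv (S_numer n))
      = smult ((S_alpha n)\<^sup>2) (pcompose (pderiv (pderiv (cheb_poly (n + 2)))) [:S_alpha n - 1, S_alpha n:])"
    by (simp add: S_numer_def pderiv_add pderiv_pcompose pderiv_mult pderiv_smult pderiv_pCons
        power2_eq_square)
  have "2 * poly R 1 = poly (pderiv (pderiv (S_numer n))) 1"
    unfolding R_def by (subst S_numer_double_root) (rule poly_pderiv2_mult_double_root[of 1, simplified, symmetric])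
  also have "\<dots> = (S_alpha n)\<^sup>2 * poly (pderiv (pderiv (cheb_poly (n + 2)))) (poly [:S_alpha n - 1, S_alpha n:] 1)"
    unfolding d2 poly_smult poly_pcompose ..
  also have "\<dots> = (S_alpha n)\<^sup>2 * ((real n + 2)\<^sup>2 / (sin (2 * h))\<^sup>2)"
    using cheb(3)[unfolded two_h] unfolding S_alpha_at_one two_h by simp
  also have "\<dots> = (cos h)\<^sup>2 * (real n + 2)\<^sup>2 / (4 * (sin h)\<^sup>2)"
    unfolding alpha sin_double using cos_h sin_h by (simp add: field_simps power2_eq_square)
  finally have "poly R 1 = (cos h)\<^sup>2 * (real n + 2)\<^sup>2 / (8 * (sin h)\<^sup>2)"
    by simp
  moreover have "S_const n = 8 / (real n + 2)\<^sup>2 * ((sin h)\<^sup>2 / (cos h)\<^sup>2)"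
    by (simp add: S_const_def h_def tan_def power_divide)
  ultimately have "poly (S_polynomial n) 1
      = 8 / (real n + 2)\<^sup>2 * ((sin h)\<^sup>2 / (cos h)\<^sup>2) * ((cos h)\<^sup>2 * (real n + 2)\<^sup>2 / (8 * (sin h)\<^sup>2))"
    by (simp add: S_polynomial_def R_def[symmetric])
  also have "\<dots> = 1"
    using sin_h cos_h by (simp add: field_simps)
  finally show ?thesis .
qed

definition S_node :: "nat \<Rightarrow> nat \<Rightarrow> real" where
  "S_node n k = (cos (real k * pi / (real n + 2)) + 1) / S_alpha n - 1"

lemma S_numer_S_node: "poly (S_numer n) (S_node n k) = 1 + (-1) ^ k"
proof -
  have "S_alpha n * (S_node n k + 1) - 1 = cos (real k * pi / (real n + 2))"
    using S_alpha_bounds(1)[of n] by (simp add: S_node_def)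
  moreover have "real (n + 2) * (real k * pi / (real n + 2)) = real k * pi"
    by (simp add: field_simps)
  ultimately show ?thesis
    unfolding poly_S_numer using cheb_T_cos[of "n + 2" "real k * pi / (real n + 2)"] by simp
qed

lemma S_node_strict_decreasing:
  assumes "i < j" "j \<le> n + 2"
  shows "S_node n j < S_node n i"
proof -
  have "cos (real j * pi / (real n + 2)) < cos (real i * pi / (real n + 2))"
  proof (rule cos_monotone_0_pi)
    show "real i * pi / (real n + 2) < real j * pi / (real n + 2)"
      using assms by (intro divide_strict_right_mono mult_strict_right_mono) auto
    have "real j * pi \<le> (real n + 2) * pi"
      using assms by (intro mult_right_mono) auto
    then show "real j * pi / (real n + 2) \<le> pi" by (simp add: divide_le_eq)
  qed simp
  then show ?thesis
    unfolding S_node_def using S_alpha_bounds(1)[of n] by (simp add: divide_strict_right_mono)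
qed

lemma S_node_1: "S_node n 1 = 1"
proof -
  have "cos (pi / (real n + 2)) + 1 = 2 * S_alpha n" by (simp add: S_alpha_def)
  then show ?thesis using S_alpha_bounds(1)[of n] by (simp add: S_node_def)
qed

lemma S_node_bounds: "-1 \<le> S_node n k" "2 \<le> k \<Longrightarrow> k \<le> n + 2 \<Longrightarrow> S_node n k < 1"
proof -
  have "0 \<le> cos (real k * pi / (real n + 2)) + 1"
    using cos_ge_minus_one[of "real k * pi / (real n + 2)"] by linarith
  then show "-1 \<le> S_node n k"
    using S_alpha_bounds(1)[of n] by (simp add: S_node_def)
  show "2 \<le> k \<Longrightarrow> k \<le> n + 2 \<Longrightarrow> S_node n k < 1"
    using S_node_strict_decreasing[of 1 k n] S_node_1[of n] by simp
qed

lemma S_polynomial_weighted_bound: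
  assumes "\<bar>x\<bar> \<le> 1"
  shows "(2 - 2 * x)\<^sup>2 * poly (S_polynomial n) x \<le> 8 * S_const n"
proof -
  have "S_alpha n * (x + 1) \<le> 1 * 2"
    using S_alpha_bounds[of n] assms by (intro mult_mono) auto
  then have "\<bar>S_alpha n * (x + 1) - 1\<bar> \<le> 1"
    using S_alpha_bounds[of n] assms by (auto simp: abs_le_iff)
  then have "poly (S_numer n) x \<le> 2"
    using abs_cheb_T_le_one[of _ "n + 2"] by (simp add: poly_S_numer abs_le_iff)
  moreover have "S_const n \<ge> 0" by (simp add: S_const_def)
  moreover have "(2 - 2 * x)\<^sup>2 * poly (S_polynomial n) x = 4 * (S_const n * poly (S_numer n) x)"
    using S_polynomial_weighted[of x n] by (simp add: power2_eq_square algebra_simps)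
  ultimately show ?thesis
    using mult_left_mono[of "poly (S_numer n) x" 2 "S_const n"] by simp
qed

lemma S_polynomial_weighted_at_S_node:
  "(2 - 2 * S_node n 2)\<^sup>2 * poly (S_polynomial n) (S_node n 2) = 8 * S_const n"
  using S_polynomial_weighted[of "S_node n 2" n] S_numer_S_node[of n 2]
  by (simp add: power2_eq_square algebra_simps)

lemma S_polynomial_minus_alternates:
  fixes p :: "real poly"
  assumes nonneg: "\<And>x. \<bar>x\<bar> \<le> 1 \<Longrightarrow> poly p x \<ge> 0"
    and bound: "\<And>x. \<bar>x\<bar> \<le> 1 \<Longrightarrow> (2 - 2 * x)\<^sup>2 * poly p x \<le> 8 * S_const n"
    and k: "k \<le> n"
  shows "(-1) ^ k * poly (S_polynomial n - p) (S_node n (k + 2)) \<ge> 0"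
proof -
  define x where "x = S_node n (k + 2)"
  have x: "\<bar>x\<bar> \<le> 1" "x < 1"
    using S_node_bounds[where n = n and k = "k + 2"] k by (auto simp: x_def)
  then have weight_pos: "(2 - 2 * x)\<^sup>2 > 0" by simp
  have weighted: "(2 - 2 * x)\<^sup>2 * poly (S_polynomial n) x = 4 * S_const n * (1 + (-1) ^ k)"
    using S_polynomial_weighted[of x n] S_numer_S_node[of n "k + 2"]
    by (simp add: x_def power2_eq_square algebra_simps)
  show ?thesis
    unfolding x_def[symmetric]
  proof (cases "even k")
    case True
    then have "(2 - 2 * x)\<^sup>2 * poly (S_polynomial n - p) x = 8 * S_const n - (2 - 2 * x)\<^sup>2 * poly p x"
      using weighted by (simp add: algebra_simps)
    also have "\<dots> \<ge> 0" using bound[OF x(1)] by simp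
    finally show "(-1) ^ k * poly (S_polynomial n - p) x \<ge> 0"
      using True weight_pos by (simp add: zero_le_mult_iff)
  next
    case False
    then have "poly (S_polynomial n) x = 0"
      using weighted weight_pos by simp
    then show "(-1) ^ k * poly (S_polynomial n - p) x \<ge> 0"
      using False nonneg[OF x(1)] by simp
  qed
qed

lemma S_polynomial_unique:
  fixes p :: "real poly"
  assumes deg: "degree p \<le> n" and p1: "poly p 1 = 1"
    and nonneg: "\<And>x. \<bar>x\<bar> \<le> 1 \<Longrightarrow> poly p x \<ge> 0"
    and bound: "\<And>x. \<bar>x\<bar> \<le> 1 \<Longrightarrow> (2 - 2 * x)\<^sup>2 * poly p x \<le> 8 * S_const n"
  shows "p = S_polynomial n"
proof -
  have "S_polynomial n - p = 0"
  proof (rule poly_eq_0_if_alternating[where x = "\<lambda>k. S_node n (k + 2)" and d = n and z = 1])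
    show "S_node n (j + 2) < S_node n (i + 2)" if "i < j" "j \<le> n" for i j
      using that by (intro S_node_strict_decreasing) auto
    show "S_node n (k + 2) < 1" if "k \<le> n" for k
      using that S_node_bounds(2)[where n = n and k = "k + 2"] by simp
    show "degree (S_polynomial n - p) \<le> n"
      using degree_diff_le[OF degree_S_polynomial deg] .
    show "poly (S_polynomial n - p) 1 = 0"
      by (simp add: S_polynomial_at_one p1)
    show "(-1) ^ k * poly (S_polynomial n - p) (S_node n (k + 2)) \<ge> 0" if "k \<le> n" for k
      using S_polynomial_minus_alternates[OF nonneg bound that] .
  qed
  then show ?thesis by simp
qed

lemma extremal_SUP_weighted_poly:
  fixes p :: "real poly"
  assumes deg: "degree p \<le> n" and p1: "poly p 1 = 1"
    and nonneg: "\<And>x. \<bar>x\<bar> \<le> 1 \<Longrightarrow> poly p x \<ge> 0"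
  defines "M \<equiv> (SUP x\<in>{-1..1}. (2 - 2 * x)\<^sup>2 * poly p x)"
  shows "8 * S_const n \<le> M" and "M = 8 * S_const n \<longleftrightarrow> p = S_polynomial n"
proof -
  have "bdd_above ((\<lambda>x. (2 - 2 * x)\<^sup>2 * poly p x) ` {-1..1})"
    by (intro bounded_imp_bdd_above compact_imp_bounded compact_continuous_image continuous_intros)
      auto
  then have le_M: "(2 - 2 * x)\<^sup>2 * poly p x \<le> M" if "\<bar>x\<bar> \<le> 1" for x
    unfolding M_def using that by (intro cSUP_upper) (auto simp: abs_le_iff)
  have unique: "p = S_polynomial n" if "\<And>x. \<bar>x\<bar> \<le> 1 \<Longrightarrow> (2 - 2 * x)\<^sup>2 * poly p x \<le> 8 * S_const n"
    using S_polynomial_unique[OF deg p1 nonneg that] .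
  have node: "\<bar>S_node n 2\<bar> \<le> 1" using S_node_bounds[where n = n and k = 2] by simp
  show lower: "8 * S_const n \<le> M"
  proof (cases "\<forall>x. \<bar>x\<bar> \<le> 1 \<longrightarrow> (2 - 2 * x)\<^sup>2 * poly p x \<le> 8 * S_const n")
    case True
    then have "p = S_polynomial n" using unique by blast
    then show ?thesis
      using le_M[OF node] S_polynomial_weighted_at_S_node[of n] by simp
  next
    case False
    then show ?thesis using le_M by force
  qed
  show "M = 8 * S_const n \<longleftrightarrow> p = S_polynomial n"
  proof
    assume "M = 8 * S_const n"
    then show "p = S_polynomial n" using unique le_M by simp
  next
    assume "p = S_polynomial n"
    then have "M \<le> 8 * S_const n"
      unfolding M_def using S_polynomial_weighted_bound
      by (intro cSUP_least) (auto simp: abs_le_iff)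
    then show "M = 8 * S_const n" using lower by simp
  qed
qed

lemma cheb_coeff_S_polynomial:
  "cheb_coeff m (S_polynomial n) = 1 / pi * integral {-1..1} (\<lambda>x. S_poly n x * cheb_T m x / sqrt (1 - x\<^sup>2))"
  unfolding cheb_coeff_def
proof (intro arg_cong[where f = "\<lambda>I. 1 / pi * I"] integral_cong)
  fix x :: real
  \<comment> \<open>at \<open>x = 1\<close> both integrands are divided by \<open>sqrt 0 = 0\<close>, hence vanish\<close>
  show "poly (S_polynomial n) x * cheb_T m x / sqrt (1 - x\<^sup>2) = S_poly n x * cheb_T m x / sqrt (1 - x\<^sup>2)"
    by (cases "x = 1") (simp_all add: S_poly_eq_poly_S_polynomial)
qed

lemma cos_poly_eq_S_polynomial_iff:
  assumes sym: "\<And>j. u j = u (- j)"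
  shows "cos_poly n u = S_polynomial n \<longleftrightarrow> (\<forall>m \<in> {0..n}. u (int m) = u (- int m) \<and>
    u (int m) = 1 / pi * integral {-1..1} (\<lambda>x. S_poly n x * cheb_T m x / sqrt (1 - x\<^sup>2)))"
proof -
  have "cos_poly n u = S_polynomial n
      \<longleftrightarrow> (\<forall>m \<in> {0..n}. cheb_coeff m (cos_poly n u) = cheb_coeff m (S_polynomial n))"
    using poly_eq_if_cheb_coeff_eq[OF degree_cos_poly degree_S_polynomial] by auto
  then show ?thesis
    using sym by (simp add: cheb_coeff_cos_poly cheb_coeff_S_polynomial)
qed

theorem theorem1p4:
  fixes n :: nat and u :: "int \<Rightarrow> real"
  assumes "n \<ge> 1"
    and "\<And>j. \<bar>j\<bar> > int n \<Longrightarrow> u j = 0"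
    and "\<And>j. u j = u (- j)"
    and "(\<Sum>j = - int n .. int n. u j) = 1"
    and "\<And>\<xi>. fourier n u \<xi> \<in> \<real>\<^sub>\<ge>\<^sub>0"
  shows "op_sup n u \<ge> 2 ^ 6 / (real n + 2)\<^sup>2 * (tan (pi / (2 * real n + 4)))\<^sup>2
    \<and> (op_sup n u = 2 ^ 6 / (real n + 2)\<^sup>2 * (tan (pi / (2 * real n + 4)))\<^sup>2
        \<longleftrightarrow> (\<forall>m \<in> {0..n}. u (int m) = u (- int m) \<and>
              u (int m) = 1 / pi * integral {-1..1}
                 (\<lambda>x. S_poly n x * cheb_T m x / sqrt (1 - x\<^sup>2))))"
proof -
  note sym = assms(3) and pos = assms(5)
  have bound: "2 ^ 6 / (real n + 2)\<^sup>2 * (tan (pi / (2 * real n + 4)))\<^sup>2 = 8 * S_const n"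
    by (simp add: S_const_def)
  have "op_sup n u = (SUP x\<in>{-1..1}. (2 - 2 * x)\<^sup>2 * poly (cos_poly n u) x)"
    by (rule op_sup_eq_SUP_cos_poly[of u, OF sym pos])
  moreover note extremal_SUP_weighted_poly[OF degree_cos_poly cos_poly_at_one[of u, OF sym assms(4)]
      cos_poly_nonneg[of u, OF sym pos]]
  ultimately show ?thesis
    unfolding bound cos_poly_eq_S_polynomial_iff[of u, OF sym] by simp
qed

end
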